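(* Let $h\in C^2([0,\infty))$ with $h'(r)\ge 0$, let $R>0$ and let $B(R)\subset\mathbb{R}^m$ be the ball of radius $R$ centered at the origin. Then $\sigma_1(B(R);\gamma_h)\le \frac1R$.
   Context: $d\gamma_h=e^{h(|x|)}\,dx$. $\sigma_1(B(R);\gamma_h)$ is the first nonzero eigenvalue of the weighted Steklov problem $-\Delta u-\nabla h\cdot\nabla u=0$ in $B(R)$, $\partial u/\partial\nu=\sigma u$ on $\partial B(R)$ (here $h$ means $h(|x|)$), characterized by $\sigma_1(B(R);\gamma_h)=\inf\{\frac{\int_{B(R)}|\nabla u|^2\,d\gamma_h}{\int_{\partial B(R)}u^2e^{h(|x|)}\,dA}: u\in W^{1,2}(B(R))\setminus\{0\},\ \int_{\partial B(R)}u\,e^{h(|x|)}\,dA=0\}$, with $dA$ the surface measure. *)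

theory Defs
  imports "HOL-Analysis.Analysis"
begin

text \<open>Surface integral over the sphere of radius R centred at 0 in a Euclidean space
  of dimension m = DIM('a), via the standard cone (polar-coordinate) formula:
  the integral over the sphere of f dA equals (m/R) times the integral over the ball B(R)
  of f(R x / |x|) dx.  For spheres this cone measure coincides with the surface measure.\<close>
definition sphere_integral :: "real \<Rightarrow> ('a::euclidean_space \<Rightarrow> real) \<Rightarrow> real" where
  "sphere_integral R f =
     (real DIM('a) / R) * integral (ball 0 R) (\<lambda>x. f (scaleR (R / norm x) x))"

text \<open>Admissible test functions: C^1 functions u near the closed ball with gradient G,
  weighted boundary mean zero, and nonzero boundary trace (functions with zero trace
  have Rayleigh quotient +infinity and do not affect the infimum).\<close>
definition steklov_admissible ::
  "(real \<Rightarrow> real) \<Rightarrow> real \<Rightarrow> ('a::euclidean_space \<Rightarrow> real) \<Rightarrow> ('a \<Rightarrow> 'a) \<Rightarrow> bool" where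
  "steklov_admissible h R u G \<longleftrightarrow>
     (\<forall>x\<in>cball 0 R. (u has_derivative (\<lambda>v. G x \<bullet> v)) (at x)) \<and>
     continuous_on (cball 0 R) G \<and>
     sphere_integral R (\<lambda>x. u x * exp (h (norm x))) = 0 \<and>
     sphere_integral R (\<lambda>x. (u x)\<^sup>2 * exp (h (norm x))) \<noteq> 0"

definition steklov_quotient ::
  "(real \<Rightarrow> real) \<Rightarrow> real \<Rightarrow> ('a::euclidean_space \<Rightarrow> real) \<Rightarrow> ('a \<Rightarrow> 'a) \<Rightarrow> real" where
  "steklov_quotient h R u G =
     integral (ball 0 R) (\<lambda>x. (norm (G x))\<^sup>2 * exp (h (norm x))) /
     sphere_integral R (\<lambda>x. (u x)\<^sup>2 * exp (h (norm x)))"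

text \<open>First nonzero weighted Steklov eigenvalue sigma_1(B(R); gamma_h) on the ball of
  radius R in the space 'a (the type argument fixes the dimension).\<close>
definition sigma1 :: "('a::euclidean_space) itself \<Rightarrow> (real \<Rightarrow> real) \<Rightarrow> real \<Rightarrow> real" where
  "sigma1 _ h R = Inf {steklov_quotient h R u G | (u :: 'a \<Rightarrow> real) G.
                          steklov_admissible h R u G}"

end

theory Submission
  imports Defs
begin

(* Test the Rayleigh quotient with a coordinate function u x = b \<bullet> x for a basis vector b.
   It is odd, so its weighted boundary mean vanishes, and its gradient is the unit vector b.
   On the sphere the weight is exp (h R), inside the ball it is at most exp (h R) since h is
   nondecreasing; with the cone formula for the sphere integral the quotient is therefore at most
   |B(R)| / (m R J b), where J b is the integral of (b \<bullet> x)^2 / |x|^2 over the ball.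
   Summed over the basis these integrals give |B(R)|, so the largest J b is at least |B(R)| / m,
   and the quotient for that b is at most 1 / R. *)

lemma sum_le_card_mult_some_term:
  fixes f :: "'a \<Rightarrow> 'b::linordered_semidom"
  assumes "finite A" "A \<noteq> {}"
  obtains a where "a \<in> A" "sum f A \<le> of_nat (card A) * f a"
proof -
  have "Max (f ` A) \<in> f ` A"
    using assms by simp
  then obtain a where a: "a \<in> A" "f a = Max (f ` A)"
    by (metis imageE)
  have "sum f A \<le> of_nat (card A) * f a"
    using assms by (intro sum_bounded_above) (auto simp: a(2))
  with a(1) show thesis by (rule that)
qed

lemma integral_odd_eq_0:
  fixes f :: "'a::euclidean_space \<Rightarrow> real"
  assumes "bounded S" and symm: "\<And>x. -x \<in> S \<longleftrightarrow> x \<in> S" and odd: "\<And>x. f (-x) = - f x"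
  shows "integral S f = 0"
proof -
  obtain a :: 'a where a: "S \<subseteq> cbox (-a) a"
    using bounded_subset_cbox_symmetric[OF \<open>bounded S\<close>] by blast
  define F where "F x = (if x \<in> S then f x else 0)" for x
  have "integral S f = integral (cbox (-a) a) F"
    unfolding F_def using integral_restrict_Int[of "cbox (-a) a" S f] a
    by (simp add: Int_absorb2)
  moreover have "integral (cbox (-a) a) F = - integral (cbox (-a) a) F"
  proof -
    have "F (-x) = - F x" for x
      unfolding F_def using odd symm by auto
    then show ?thesis
      using integral_reflect[of a "-a" F] by simp
  qed
  ultimately show ?thesis by simp
qed

lemma mono_on_atLeast_if_nonneg_derivative:
  fixes f f' :: "real \<Rightarrow> real"
  assumes "\<And>r. a \<le> r \<Longrightarrow> (f has_real_derivative f' r) (at r within {a..})"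
    and "\<And>r. a \<le> r \<Longrightarrow> 0 \<le> f' r"
  shows "mono_on {a..} f"
proof (rule mono_onI)
  fix r s assume rs: "r \<in> {a..}" "s \<in> {a..}" "r \<le> s"
  show "f r \<le> f s"
  proof (rule DERIV_nonneg_imp_increasing_open[OF \<open>r \<le> s\<close>])
    fix x assume x: "r < x" "x < s"
    then have "at x within {a..} = at x"
      using rs by (intro at_within_interior) auto
    then show "\<exists>y. (f has_real_derivative y) (at x) \<and> 0 \<le> y"
      using assms[of x] x rs by auto
  next
    have "continuous_on {a..} f"
      using assms(1) DERIV_continuous continuous_on_eq_continuous_within by blast
    then show "continuous_on {r..s} f"
      by (rule continuous_on_subset) (use rs in auto)
  qed
qed

lemma integrable_on_ball_inner_Basis_square_div_norm_square:
  fixes b :: "'a::euclidean_space"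
  assumes "b \<in> Basis"
  shows "(\<lambda>x. (b \<bullet> x)\<^sup>2 / (norm x)\<^sup>2) integrable_on ball 0 R"
proof -
  have "(\<lambda>x. (b \<bullet> x)\<^sup>2 / (norm x)\<^sup>2) integrable_on (ball 0 R - {0})"
  proof (rule measurable_bounded_by_integrable_imp_integrable)
    show "(\<lambda>x. (b \<bullet> x)\<^sup>2 / (norm x)\<^sup>2) \<in> borel_measurable (lebesgue_on (ball 0 R - {0}))"
      by (intro continuous_imp_measurable_on_sets_lebesgue continuous_intros) auto
    show "(\<lambda>x. 1::real) integrable_on (ball 0 R - {0})"
      by (rule integrable_on_const) (auto intro: fmeasurable_Diff)
    fix x :: 'a
    have "\<bar>b \<bullet> x\<bar> \<le> norm x"
      using Basis_le_norm[OF assms, of x] by (simp add: inner_commute)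
    then have "(b \<bullet> x)\<^sup>2 \<le> (norm x)\<^sup>2"
      by (metis abs_ge_zero power2_abs power_mono)
    then show "norm ((b \<bullet> x)\<^sup>2 / (norm x)\<^sup>2) \<le> 1"
      by (cases "x = 0") (auto simp: divide_le_eq_1)
  qed auto
  then show ?thesis
    by (rule integrable_spike_set) (auto intro: negligible_subset[of "{0}"])
qed

lemma sum_Basis_integral_inner_square_div_norm_square:
  "(\<Sum>b\<in>Basis. integral (ball 0 R) (\<lambda>x::'a::euclidean_space. (b \<bullet> x)\<^sup>2 / (norm x)\<^sup>2))
     = measure lborel (ball (0::'a) R)"
proof -
  have "(\<Sum>b\<in>Basis. integral (ball 0 R) (\<lambda>x::'a. (b \<bullet> x)\<^sup>2 / (norm x)\<^sup>2))
      = integral (ball 0 R) (\<lambda>x::'a. \<Sum>b\<in>Basis. (b \<bullet> x)\<^sup>2 / (norm x)\<^sup>2)"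
    by (rule integral_sum[symmetric])
      (auto intro: integrable_on_ball_inner_Basis_square_div_norm_square)
  also have "\<dots> = integral (ball 0 R) (\<lambda>x::'a. 1::real)"
  proof (rule integral_spike[of "{0}"], simp)
    fix x :: 'a assume "x \<in> ball 0 R - {0}"
    moreover have "(\<Sum>b\<in>Basis. (b \<bullet> x)\<^sup>2) = (norm x)\<^sup>2"
      by (simp only: power2_norm_eq_inner euclidean_inner[of x x])
        (simp add: power2_eq_square inner_commute)
    ultimately show "1 = (\<Sum>b\<in>Basis. (b \<bullet> x)\<^sup>2 / (norm x)\<^sup>2)"
      by (simp add: sum_divide_distrib[symmetric])
  qed
  also have "\<dots> = measure lborel (ball (0::'a) R)"
    using lmeasure_integral[of "ball (0::'a) R"] measure_completion[of "ball (0::'a) R" lborel]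
    by simp
  finally show ?thesis .
qed

lemma integral_le_mult_measure:
  fixes f :: "'a::euclidean_space \<Rightarrow> real"
  assumes "S \<in> lmeasurable" and "\<And>x. x \<in> S \<Longrightarrow> f x \<le> c" and "0 \<le> c"
  shows "integral S f \<le> c * measure lebesgue S"
proof (cases "f integrable_on S")
  case True
  have "integral S f \<le> integral S (\<lambda>x. c)"
    using True assms(1,2) by (intro integral_le) (auto intro: integrable_on_const)
  also have "\<dots> = c * measure lebesgue S"
    using lmeasure_integral[OF assms(1)] integral_mult_right[of S c "\<lambda>x. 1"] by simp
  finally show ?thesis .
next
  case False
  then show ?thesis
    using assms(3) by (simp add: not_integrable_integral)
qed

lemma sphere_integral_odd_eq_0:
  assumes "\<And>x. f (-x) = - f x"
  shows "sphere_integral R f = 0"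
proof -
  have "integral (ball 0 R) (\<lambda>x::'a. f ((R / norm x) *\<^sub>R x)) = 0"
    by (rule integral_odd_eq_0) (auto simp: assms)
  then show ?thesis
    unfolding sphere_integral_def by simp
qed

lemma sphere_integral_mult_radial:
  fixes f :: "'a::euclidean_space \<Rightarrow> real"
  assumes "R > 0"
  shows "sphere_integral R (\<lambda>x. f x * w (norm x)) = w R * sphere_integral R f"
proof -
  have "integral (ball 0 R) (\<lambda>x::'a. f ((R / norm x) *\<^sub>R x) * w (norm ((R / norm x) *\<^sub>R x)))
      = integral (ball 0 R) (\<lambda>x. w R * f ((R / norm x) *\<^sub>R x))"
    by (rule integral_spike[of "{0}"]) (use assms in auto)
  then show ?thesis
    unfolding sphere_integral_def by simp
qed

lemma sphere_integral_inner_square: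
  fixes b :: "'a::euclidean_space"
  assumes "R > 0"
  shows "sphere_integral R (\<lambda>x. (b \<bullet> x)\<^sup>2)
           = real DIM('a) * R * integral (ball 0 R) (\<lambda>x. (b \<bullet> x)\<^sup>2 / (norm x)\<^sup>2)"
proof -
  have "integral (ball 0 R) (\<lambda>x::'a. (b \<bullet> ((R / norm x) *\<^sub>R x))\<^sup>2)
      = integral (ball 0 R) (\<lambda>x. R\<^sup>2 * ((b \<bullet> x)\<^sup>2 / (norm x)\<^sup>2))"
    by (simp add: power_mult_distrib power_divide)
  also have "\<dots> = R\<^sup>2 * integral (ball 0 R) (\<lambda>x. (b \<bullet> x)\<^sup>2 / (norm x)\<^sup>2)"
    by (rule integral_mult_right)
  finally show ?thesis
    unfolding sphere_integral_def using assms by (simp add: power2_eq_square)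
qed

lemma sphere_integral_inner_square_weighted:
  fixes b :: "'a::euclidean_space"
  assumes "R > 0"
  shows "sphere_integral R (\<lambda>x. (b \<bullet> x)\<^sup>2 * exp (h (norm x)))
           = exp (h R) * real DIM('a) * R * integral (ball 0 R) (\<lambda>x. (b \<bullet> x)\<^sup>2 / (norm x)\<^sup>2)"
  using sphere_integral_mult_radial[of R "\<lambda>x. (b \<bullet> x)\<^sup>2" "\<lambda>r. exp (h r)"]
    sphere_integral_inner_square[of R b] assms
  by simp

lemma steklov_quotient_nonneg:
  assumes "R \<ge> 0"
  shows "0 \<le> steklov_quotient h R u (G :: 'a::euclidean_space \<Rightarrow> 'a)"
proof -
  have "0 \<le> integral S f" if "\<And>x. 0 \<le> f x" for S and f :: "'a \<Rightarrow> real"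
    using that integral_nonneg[of f S] not_integrable_integral[of f S]
    by (cases "f integrable_on S") auto
  then show ?thesis
    unfolding steklov_quotient_def sphere_integral_def using assms
    by (intro divide_nonneg_nonneg mult_nonneg_nonneg) auto
qed

lemma sigma1_le_steklov_quotient:
  fixes u :: "'a::euclidean_space \<Rightarrow> real"
  assumes "R \<ge> 0" and "steklov_admissible h R u G"
  shows "sigma1 TYPE('a) h R \<le> steklov_quotient h R u G"
  unfolding sigma1_def
  using assms steklov_quotient_nonneg by (intro cInf_lower bdd_belowI[of _ 0]) blast+

lemma coordinate_steklov_admissible:
  fixes b :: "'a::euclidean_space"
  assumes "R > 0" and "integral (ball 0 R) (\<lambda>x. (b \<bullet> x)\<^sup>2 / (norm x)\<^sup>2) > 0"
  shows "steklov_admissible h R (\<lambda>x. b \<bullet> x) (\<lambda>x. b)"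
  unfolding steklov_admissible_def
proof (intro conjI ballI)
  show "((\<lambda>x. b \<bullet> x) has_derivative (\<lambda>v. b \<bullet> v)) (at x)" for x :: 'a
    by (intro derivative_eq_intros) auto
  show "sphere_integral R (\<lambda>x. (b \<bullet> x) * exp (h (norm x))) = 0"
    by (rule sphere_integral_odd_eq_0) simp
  show "sphere_integral R (\<lambda>x. (b \<bullet> x)\<^sup>2 * exp (h (norm x))) \<noteq> 0"
    using assms by (simp add: sphere_integral_inner_square_weighted)
qed simp

lemma coordinate_steklov_quotient_le:
  fixes b :: "'a::euclidean_space"
  assumes "R > 0" and "b \<in> Basis"
    and h_le: "\<And>r. 0 \<le> r \<Longrightarrow> r \<le> R \<Longrightarrow> h r \<le> h R"
    and I_pos: "integral (ball 0 R) (\<lambda>x. (b \<bullet> x)\<^sup>2 / (norm x)\<^sup>2) > 0"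
    and large: "measure lborel (ball (0::'a) R)
                  \<le> real DIM('a) * integral (ball 0 R) (\<lambda>x. (b \<bullet> x)\<^sup>2 / (norm x)\<^sup>2)"
  shows "steklov_quotient h R (\<lambda>x. b \<bullet> x) (\<lambda>x. b) \<le> 1 / R"
proof -
  define V where "V = measure lborel (ball (0::'a) R)"
  define I where "I = integral (ball 0 R) (\<lambda>x. (b \<bullet> x)\<^sup>2 / (norm x)\<^sup>2)"
  have "integral (ball 0 R) (\<lambda>x::'a. exp (h (norm x))) \<le> exp (h R) * measure lebesgue (ball (0::'a) R)"
    by (rule integral_le_mult_measure) (auto simp: h_le)
  then have numerator: "integral (ball 0 R) (\<lambda>x::'a. (norm b)\<^sup>2 * exp (h (norm x))) \<le> exp (h R) * V"
    unfolding V_def using \<open>b \<in> Basis\<close> by simp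
  have "steklov_quotient h R (\<lambda>x. b \<bullet> x) (\<lambda>x. b)
      = integral (ball 0 R) (\<lambda>x::'a. (norm b)\<^sup>2 * exp (h (norm x))) / (exp (h R) * real DIM('a) * R * I)"
    unfolding steklov_quotient_def I_def using \<open>R > 0\<close>
    by (simp add: sphere_integral_inner_square_weighted)
  also have "\<dots> \<le> exp (h R) * V / (exp (h R) * real DIM('a) * R * I)"
    by (rule divide_right_mono[OF numerator]) (use \<open>R > 0\<close> I_pos in \<open>simp add: I_def\<close>)
  also have "\<dots> \<le> 1 / R"
    using large \<open>R > 0\<close> I_pos unfolding V_def I_def by (simp add: field_simps)
  finally show ?thesis .
qed

lemma sigma1_le_inverse_radius:
  assumes "R > 0" and h_le: "\<And>r. 0 \<le> r \<Longrightarrow> r \<le> R \<Longrightarrow> h r \<le> h R"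
  shows "sigma1 TYPE('a::euclidean_space) h R \<le> 1 / R"
proof -
  obtain b :: 'a where b: "b \<in> Basis"
    and large: "measure lborel (ball (0::'a) R)
                  \<le> real DIM('a) * integral (ball 0 R) (\<lambda>x. (b \<bullet> x)\<^sup>2 / (norm x)\<^sup>2)"
    using sum_le_card_mult_some_term[OF finite_Basis nonempty_Basis,
        of "\<lambda>c. integral (ball 0 R) (\<lambda>x::'a. (c \<bullet> x)\<^sup>2 / (norm x)\<^sup>2)"]
    by (auto simp: sum_Basis_integral_inner_square_div_norm_square)
  have "0 < measure lborel (ball (0::'a) R)"
    using content_ball_pos[OF \<open>R > 0\<close>] by simp
  also note large
  finally have I_pos: "integral (ball 0 R) (\<lambda>x. (b \<bullet> x)\<^sup>2 / (norm x)\<^sup>2) > 0"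
    by (simp add: zero_less_mult_iff)
  then have "sigma1 TYPE('a) h R \<le> steklov_quotient h R (\<lambda>x. b \<bullet> x) (\<lambda>x. b)"
    using \<open>R > 0\<close> by (intro sigma1_le_steklov_quotient coordinate_steklov_admissible) auto
  also have "\<dots> \<le> 1 / R"
    using large \<open>R > 0\<close> b h_le I_pos by (intro coordinate_steklov_quotient_le)
  finally show ?thesis .
qed

theorem proposition2p1:
  fixes h :: "real \<Rightarrow> real" and R :: real
  assumes "\<exists>h1 h2. (\<forall>r\<ge>0. (h has_real_derivative h1 r) (at r within {0..})) \<and>
                   (\<forall>r\<ge>0. (h1 has_real_derivative h2 r) (at r within {0..})) \<and>
                   continuous_on {0..} h2 \<and>
                   (\<forall>r\<ge>0. h1 r \<ge> 0)"
    and "R > 0"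
  shows "sigma1 TYPE('a::euclidean_space) h R \<le> 1 / R"
proof -
  obtain h1 where "\<And>r. 0 \<le> r \<Longrightarrow> (h has_real_derivative h1 r) (at r within {0..})"
    and "\<And>r. 0 \<le> r \<Longrightarrow> 0 \<le> h1 r"
    using assms(1) by blast
  then have "mono_on {0..} h"
    by (rule mono_on_atLeast_if_nonneg_derivative)
  then show ?thesis
    using \<open>R > 0\<close> by (intro sigma1_le_inverse_radius) (auto intro: mono_onD)
qed

end
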